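(* Let $P$ be a valid path with $m=m_T^P$ toll arcs $\tau_1,\dots,\tau_m$, and define recursively for $k=1,\dots,m$ $$t_k=\min_{0\le i<k<j\le m+1}\Big\{\mathcal{U}_{i,j}-\mathcal{L}_{i,j}-\sum_{l=i+1}^{k-1}t_l\Big\}.$$ Then the toll assignment $T(\tau_k)=t_k$ ($k=1,\dots,m$) is optimal for $P$: it is consistent with $P$, and every toll vector $T'$ consistent with $P$ satisfies $\sum_{k=1}^m T'(\tau_k)\le\sum_{k=1}^m t_k$.
   Context: Setting: $G=(V,A)$ is a directed multigraph with $A=A_T\cup A_U$ partitioned into toll arcs and toll-free arcs, fixed costs $c:A_T\to\mathbf{N}$, $d:A_U\to\mathbf{N}$, and vertices $s,t$ such that there is an $s$–$t$ path using only toll-free arcs. A toll vector $T$ assigns a toll $T(e)\ge0$ to each toll arc; under $T$ a toll arc $e$ costs $c(e)+T(e)$ and a toll-free arc $e$ costs $d(e)$; path length is the sum of arc costs. For an $s$–$t$ path $P$, $\mathcal{N}_T(P)$ is the network with all toll arcs not on $P$ deleted, with costs induced by $T$. A path $P$ from $s$ to $t$ is valid if it contains $m_T^P\ge1$ toll arcs and is a shortest $s$–$t$ path in $\mathcal{N}_0(P)$ (all tolls zero). Write a valid path as $P=(\upsilon_{0,1},\tau_1,\upsilon_{1,2},\dots,\tau_m,\upsilon_{m,m+1})$ with $\tau_i$ the $i$-th toll arc in order of traversal; set $\mathrm{TERM}(\tau_0)=s$, $\mathrm{INIT}(\tau_{m+1})=t$. For $0\le i<j\le m+1$, $\mathcal{U}_{i,j}$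 is the length of a shortest path from $\mathrm{TERM}(\tau_i)$ to $\mathrm{INIT}(\tau_j)$ using only toll-free arcs ($+\infty$ if none), and $\mathcal{L}_{k,l}=\sum_{i=k}^{l-1}\mathcal{U}_{i,i+1}+\sum_{i=k+1}^{l-1}c(\tau_i)$ (empty sums are $0$). A toll vector is consistent with $P$ if $P$ is a shortest $s$–$t$ path in $\mathcal{N}_T(P)$ (only tolls on arcs of $P$ matter). *)

theory Defs
  imports Complex_Main "HOL-Library.Extended_Real"
begin

text \<open>Directed multigraph: arcs of an abstract type 'e, with tail src and head tgt.\<close>

fun walk :: "('e \<Rightarrow> 'v) \<Rightarrow> ('e \<Rightarrow> 'v) \<Rightarrow> 'v \<Rightarrow> 'e list \<Rightarrow> 'v \<Rightarrow> bool" where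
  "walk src tgt u [] v = (u = v)"
| "walk src tgt u (e # es) v = (src e = u \<and> walk src tgt (tgt e) es v)"

definition is_path :: "('e \<Rightarrow> 'v) \<Rightarrow> ('e \<Rightarrow> 'v) \<Rightarrow> 'e set \<Rightarrow> 'v \<Rightarrow> 'e list \<Rightarrow> 'v \<Rightarrow> bool" where
  "is_path src tgt As u P v \<longleftrightarrow> set P \<subseteq> As \<and> walk src tgt u P v \<and> distinct (u # map tgt P)"

definition plen :: "('e \<Rightarrow> real) \<Rightarrow> 'e list \<Rightarrow> real" where
  "plen w P = sum_list (map w P)"

definition shortest :: "('e \<Rightarrow> 'v) \<Rightarrow> ('e \<Rightarrow> 'v) \<Rightarrow> 'e set \<Rightarrow> ('e \<Rightarrow> real) \<Rightarrow> 'v \<Rightarrow> 'e list \<Rightarrow> 'v \<Rightarrow> bool" where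
  "shortest src tgt As w u P v \<longleftrightarrow> is_path src tgt As u P v \<and>
     (\<forall>Q. is_path src tgt As u Q v \<longrightarrow> plen w P \<le> plen w Q)"

definition net_arcs :: "'e set \<Rightarrow> 'e set \<Rightarrow> 'e list \<Rightarrow> 'e set" where
  "net_arcs AT AU P = AU \<union> (AT \<inter> set P)"

definition net_cost :: "'e set \<Rightarrow> ('e \<Rightarrow> nat) \<Rightarrow> ('e \<Rightarrow> nat) \<Rightarrow> ('e \<Rightarrow> real) \<Rightarrow> 'e \<Rightarrow> real" where
  "net_cost AT c d T e = (if e \<in> AT then real (c e) + T e else real (d e))"

definition toll_vector :: "'e set \<Rightarrow> ('e \<Rightarrow> real) \<Rightarrow> bool" where
  "toll_vector AT T \<longleftrightarrow> (\<forall>e\<in>AT. T e \<ge> 0)"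

definition tolls :: "'e set \<Rightarrow> 'e list \<Rightarrow> 'e list" where
  "tolls AT P = filter (\<lambda>e. e \<in> AT) P"

definition num_tolls :: "'e set \<Rightarrow> 'e list \<Rightarrow> nat" where
  "num_tolls AT P = length (tolls AT P)"

text \<open>tau i = i-th toll arc of P (1-based).\<close>
definition tau :: "'e set \<Rightarrow> 'e list \<Rightarrow> nat \<Rightarrow> 'e" where
  "tau AT P i = tolls AT P ! (i - 1)"

definition valid_path :: "('e \<Rightarrow> 'v) \<Rightarrow> ('e \<Rightarrow> 'v) \<Rightarrow> 'e set \<Rightarrow> 'e set \<Rightarrow> ('e \<Rightarrow> nat) \<Rightarrow> ('e \<Rightarrow> nat)
    \<Rightarrow> 'v \<Rightarrow> 'v \<Rightarrow> 'e list \<Rightarrow> bool" where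
  "valid_path src tgt AT AU c d s t P \<longleftrightarrow> num_tolls AT P \<ge> 1 \<and>
     shortest src tgt (net_arcs AT AU P) (net_cost AT c d (\<lambda>_. 0)) s P t"

definition consistent :: "('e \<Rightarrow> 'v) \<Rightarrow> ('e \<Rightarrow> 'v) \<Rightarrow> 'e set \<Rightarrow> 'e set \<Rightarrow> ('e \<Rightarrow> nat) \<Rightarrow> ('e \<Rightarrow> nat)
    \<Rightarrow> 'v \<Rightarrow> 'v \<Rightarrow> 'e list \<Rightarrow> ('e \<Rightarrow> real) \<Rightarrow> bool" where
  "consistent src tgt AT AU c d s t P T \<longleftrightarrow>
     shortest src tgt (net_arcs AT AU P) (net_cost AT c d T) s P t"

definition term_pt :: "('e \<Rightarrow> 'v) \<Rightarrow> 'e set \<Rightarrow> 'v \<Rightarrow> 'e list \<Rightarrow> nat \<Rightarrow> 'v" where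
  "term_pt tgt AT s P i = (if i = 0 then s else tgt (tau AT P i))"

definition init_pt :: "('e \<Rightarrow> 'v) \<Rightarrow> 'e set \<Rightarrow> 'v \<Rightarrow> 'e list \<Rightarrow> nat \<Rightarrow> 'v" where
  "init_pt src AT t P j = (if j = num_tolls AT P + 1 then t else src (tau AT P j))"

text \<open>U_{i,j}: length of a shortest toll-free path (infinity if none).\<close>
definition Ucal :: "('e \<Rightarrow> 'v) \<Rightarrow> ('e \<Rightarrow> 'v) \<Rightarrow> 'e set \<Rightarrow> 'e set \<Rightarrow> ('e \<Rightarrow> nat)
    \<Rightarrow> 'v \<Rightarrow> 'v \<Rightarrow> 'e list \<Rightarrow> nat \<Rightarrow> nat \<Rightarrow> ereal" where
  "Ucal src tgt AT AU d s t P i j =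
     Inf {ereal (plen (\<lambda>e. real (d e)) Q) | Q.
            is_path src tgt AU (term_pt tgt AT s P i) Q (init_pt src AT t P j)}"

definition Lcal :: "('e \<Rightarrow> 'v) \<Rightarrow> ('e \<Rightarrow> 'v) \<Rightarrow> 'e set \<Rightarrow> 'e set \<Rightarrow> ('e \<Rightarrow> nat) \<Rightarrow> ('e \<Rightarrow> nat)
    \<Rightarrow> 'v \<Rightarrow> 'v \<Rightarrow> 'e list \<Rightarrow> nat \<Rightarrow> nat \<Rightarrow> ereal" where
  "Lcal src tgt AT AU c d s t P k l =
     (\<Sum>i\<in>{k..<l}. Ucal src tgt AT AU d s t P i (i + 1))
     + ereal (\<Sum>i\<in>{k+1..<l}. real (c (tau AT P i)))"

primrec tseq :: "(nat \<Rightarrow> nat \<Rightarrow> ereal) \<Rightarrow> (nat \<Rightarrow> nat \<Rightarrow> ereal) \<Rightarrow> nat \<Rightarrow> nat \<Rightarrow> real list" where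
  "tseq U L m 0 = []"
| "tseq U L m (Suc n) =
     (let ts = tseq U L m n; k = Suc n in
      ts @ [real_of_ereal (Min {U i j - L i j - ereal (\<Sum>l\<in>{i+1..<k}. ts ! (l - 1)) | i j.
                                  i < k \<and> k < j \<and> j \<le> m + 1})])"

definition tvals :: "('e \<Rightarrow> 'v) \<Rightarrow> ('e \<Rightarrow> 'v) \<Rightarrow> 'e set \<Rightarrow> 'e set \<Rightarrow> ('e \<Rightarrow> nat) \<Rightarrow> ('e \<Rightarrow> nat)
    \<Rightarrow> 'v \<Rightarrow> 'v \<Rightarrow> 'e list \<Rightarrow> real list" where
  "tvals src tgt AT AU c d s t P =
     tseq (Ucal src tgt AT AU d s t P) (Lcal src tgt AT AU c d s t P) (num_tolls AT P) (num_tolls AT P)"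

definition tk :: "('e \<Rightarrow> 'v) \<Rightarrow> ('e \<Rightarrow> 'v) \<Rightarrow> 'e set \<Rightarrow> 'e set \<Rightarrow> ('e \<Rightarrow> nat) \<Rightarrow> ('e \<Rightarrow> nat)
    \<Rightarrow> 'v \<Rightarrow> 'v \<Rightarrow> 'e list \<Rightarrow> nat \<Rightarrow> real" where
  "tk src tgt AT AU c d s t P k = tvals src tgt AT AU c d s t P ! (k - 1)"

text \<open>The toll assignment T(tau_k) = t_k (other arcs: 0, irrelevant).\<close>
definition opt_toll :: "('e \<Rightarrow> 'v) \<Rightarrow> ('e \<Rightarrow> 'v) \<Rightarrow> 'e set \<Rightarrow> 'e set \<Rightarrow> ('e \<Rightarrow> nat) \<Rightarrow> ('e \<Rightarrow> nat)
    \<Rightarrow> 'v \<Rightarrow> 'v \<Rightarrow> 'e list \<Rightarrow> 'e \<Rightarrow> real" where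
  "opt_toll src tgt AT AU c d s t P e =
     (case map_of (zip (tolls AT P) (tvals src tgt AT AU c d s t P)) e of Some x \<Rightarrow> x | None \<Rightarrow> 0)"

end

theory Submission
  imports Defs
begin

text \<open>Validity of \<open>P\<close> makes \<open>U l (l+1)\<close> the cost of the toll-free stretch of \<open>P\<close> from
  \<open>TERM(\<tau>_l)\<close> to \<open>INIT(\<tau>_(l+1))\<close>, so \<open>L i j\<close> is the untolled cost of \<open>P\<close> from \<open>TERM(\<tau>_i)\<close>
  to \<open>INIT(\<tau>_j)\<close>. A nonnegative toll vector \<open>T\<close> is then consistent with \<open>P\<close> iff
  \<open>T(\<tau>_(i+1)) + \<dots> + T(\<tau>_(j-1)) \<le> U i j - L i j\<close> for all \<open>i < j\<close>: necessity by replacing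
  that stretch of \<open>P\<close> by a toll-free path, sufficiency by induction on a competing path,
  cut at its last toll arc. Maximizing the total toll under these interval constraints is
  solved greedily: \<open>t_k\<close> is the largest value the constraints allow given \<open>t_1, \<dots>, t_(k-1)\<close>,
  and the constraint attaining \<open>t_k\<close> shows that no feasible toll vector collects more on
  \<open>\<tau>_1, \<dots>, \<tau>_k\<close>.\<close>

section \<open>Walks and paths\<close>

definition walk_vertex :: "('e \<Rightarrow> 'v) \<Rightarrow> 'v \<Rightarrow> 'e list \<Rightarrow> nat \<Rightarrow> 'v" where
  "walk_vertex tgt u P n = (u # map tgt P) ! n"

lemma walk_vertex_0 [simp]: "walk_vertex tgt u P 0 = u"
  by (simp add: walk_vertex_def)

lemma walk_vertex_Suc [simp]: "n < length P \<Longrightarrow> walk_vertex tgt u P (Suc n) = tgt (P ! n)"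
  by (simp add: walk_vertex_def)

lemma walk_vertex_take:
  "a \<le> b \<Longrightarrow> b \<le> length P \<Longrightarrow> walk_vertex tgt u (take b P) a = walk_vertex tgt u P a"
  by (cases a) (auto simp: walk_vertex_def)

lemma walk_append:
  "walk src tgt u (xs @ ys) v \<longleftrightarrow> (\<exists>w. walk src tgt u xs w \<and> walk src tgt w ys v)"
  by (induction xs arbitrary: u) auto

lemma walk_last: "walk src tgt u P v \<Longrightarrow> v = walk_vertex tgt u P (length P)"
  by (induction P arbitrary: u) (auto simp: walk_vertex_def nth_Cons')

lemma walk_take_drop:
  assumes "walk src tgt u P v" and "n \<le> length P"
  shows "walk src tgt u (take n P) (walk_vertex tgt u P n)"
    and "walk src tgt (walk_vertex tgt u P n) (drop n P) v"
proof -
  obtain w where w: "walk src tgt u (take n P) w" "walk src tgt w (drop n P) v"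
    using assms(1) walk_append[of src tgt u "take n P" "drop n P" v] by auto
  have "w = walk_vertex tgt u P n"
    using walk_last[OF w(1)] walk_vertex_take[of n n P] assms(2) by simp
  with w show "walk src tgt u (take n P) (walk_vertex tgt u P n)"
    and "walk src tgt (walk_vertex tgt u P n) (drop n P) v" by simp_all
qed

lemma walk_src_nth:
  assumes "walk src tgt u P v" and "n < length P"
  shows "src (P ! n) = walk_vertex tgt u P n"
  using walk_take_drop(2)[OF assms(1), of n] assms(2) by (simp add: Cons_nth_drop_Suc[symmetric])

lemma is_path_take:
  assumes "is_path src tgt As u P v" and "n \<le> length P"
  shows "is_path src tgt As u (take n P) (walk_vertex tgt u P n)"
proof -
  have "u # map tgt (take n P) = take (Suc n) (u # map tgt P)"
    by (simp add: take_map)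
  then show ?thesis
    using assms walk_take_drop(1)[of src tgt u P v n] distinct_take[of "u # map tgt P" "Suc n"]
      set_take_subset[of n P] unfolding is_path_def by auto
qed

lemma is_path_drop:
  assumes "is_path src tgt As u P v" and "n \<le> length P"
  shows "is_path src tgt As (walk_vertex tgt u P n) (drop n P) v"
proof -
  have "walk_vertex tgt u P n # map tgt (drop n P) = drop n (u # map tgt P)"
    using assms(2) unfolding walk_vertex_def
    by (metis Cons_nth_drop_Suc drop_Suc_Cons drop_map length_Cons length_map less_Suc_eq_le)
  then show ?thesis
    using assms walk_take_drop(2)[of src tgt u P v n] distinct_drop[of "u # map tgt P" n]
      set_drop_subset[of n P] unfolding is_path_def by auto
qed

lemma is_path_drop_take:
  assumes "is_path src tgt As u P v" and "a \<le> b" and "b \<le> length P"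
  shows "is_path src tgt As (walk_vertex tgt u P a) (drop a (take b P)) (walk_vertex tgt u P b)"
  using is_path_drop[OF is_path_take[OF assms(1,3)], of a] assms(2,3)
  by (simp add: walk_vertex_take)

lemma is_path_split:
  assumes "is_path src tgt As u (xs @ e # ys) v"
  shows "is_path src tgt As u xs (src e)" and "is_path src tgt As (tgt e) ys v"
  using assms unfolding is_path_def by (auto simp: walk_append)

lemma plen_Nil [simp]: "plen w [] = 0"
  and plen_Cons [simp]: "plen w (x # xs) = w x + plen w xs"
  and plen_append [simp]: "plen w (xs @ ys) = plen w xs + plen w ys"
  by (simp_all add: plen_def)

lemma plen_take_drop: "plen w (take n xs) + plen w (drop n xs) = plen w xs"
  by (metis append_take_drop_id plen_append)

lemma plen_nonneg: "(\<And>e. e \<in> set P \<Longrightarrow> 0 \<le> w e) \<Longrightarrow> 0 \<le> plen w P"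
  unfolding plen_def by (induction P) auto

lemma plen_drop_take:
  assumes "a \<le> b" and "b \<le> length xs"
  shows "plen w (drop a (take b xs)) = (\<Sum>n\<in>{a..<b}. w (xs ! n))"
proof -
  have "plen w (drop a (take b xs)) = (\<Sum>i<b - a. w (xs ! (i + a)))"
    using assms by (simp add: plen_def sum_list_sum_nth atLeast0LessThan add.commute)
  also have "\<dots> = (\<Sum>n\<in>{a..<b}. w (xs ! n))"
    using sum.shift_bounds_nat_ivl[of "\<lambda>n. w (xs ! n)" 0 a "b - a"] assms
    by (simp add: atLeast0LessThan)
  finally show ?thesis .
qed

lemma walk_shortcut:
  assumes "walk src tgt u W v" and "set W \<subseteq> As" and "\<And>e. e \<in> As \<Longrightarrow> 0 \<le> w e"
  shows "\<exists>Q. is_path src tgt As u Q v \<and> plen w Q \<le> plen w W"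
  using assms(1,2)
proof (induction W arbitrary: u)
  case Nil
  then show ?case by (intro exI[of _ "[]"]) (simp add: is_path_def)
next
  case (Cons e W)
  then have e: "src e = u" "e \<in> As" and W: "walk src tgt (tgt e) W v" "set W \<subseteq> As" by auto
  obtain Q where Q: "is_path src tgt As (tgt e) Q v" "plen w Q \<le> plen w W"
    using Cons.IH[OF W] by blast
  show ?case
  proof (cases "u \<in> set (tgt e # map tgt Q)")
    case True
    then obtain k where "k < length (tgt e # map tgt Q)" "(tgt e # map tgt Q) ! k = u"
      by (meson in_set_conv_nth)
    then have k: "k \<le> length Q" "walk_vertex tgt (tgt e) Q k = u"
      by (simp_all add: walk_vertex_def)
    have "0 \<le> plen w (take k Q)"
      using Q(1) assms(3) by (intro plen_nonneg) (auto simp: is_path_def dest: in_set_takeD)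
    then have "plen w (drop k Q) \<le> plen w (e # W)"
      using Q(2) assms(3)[OF e(2)] plen_take_drop[of w k Q] by simp
    then show ?thesis
      using is_path_drop[OF Q(1) k(1)] k(2) by auto
  next
    case False
    then have "is_path src tgt As u (e # Q) v"
      using Q(1) e unfolding is_path_def by auto
    then show ?thesis using Q(2) by force
  qed
qed

section \<open>Greedy tolls\<close>

lemma tseq_length [simp]: "length (tseq U L m n) = n"
  by (induction n) (simp_all add: Let_def)

lemma take_tseq: "n \<le> n' \<Longrightarrow> take n (tseq U L m n') = tseq U L m n"
  by (induction n') (auto simp: Let_def le_Suc_eq)

locale greedy_tolls =
  fixes U L :: "nat \<Rightarrow> nat \<Rightarrow> ereal" and m :: nat
  assumes slack_nonneg: "\<And>i j. i < j \<Longrightarrow> j \<le> m + 1 \<Longrightarrow> 0 \<le> U i j - L i j"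
    and slack_finite: "U 0 (m + 1) - L 0 (m + 1) \<noteq> \<infinity>"
begin

abbreviation slack :: "nat \<Rightarrow> nat \<Rightarrow> ereal" where
  "slack i j \<equiv> U i j - L i j"

definition toll :: "nat \<Rightarrow> real" where
  "toll k = tseq U L m m ! (k - 1)"

definition candidates :: "nat \<Rightarrow> ereal set" where
  "candidates k = {slack i j - ereal (\<Sum>l\<in>{i+1..<k}. toll l) | i j. i < k \<and> k < j \<and> j \<le> m + 1}"

definition feasible :: "(nat \<Rightarrow> real) \<Rightarrow> bool" where
  "feasible x \<longleftrightarrow> (\<forall>i j. i < j \<longrightarrow> j \<le> m + 1 \<longrightarrow> ereal (\<Sum>l\<in>{i+1..<j}. x l) \<le> slack i j)"

lemma feasible_cong:
  assumes "\<And>l. l \<in> {1..m} \<Longrightarrow> x l = y l"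
  shows "feasible x \<longleftrightarrow> feasible y"
proof -
  have "(\<Sum>l\<in>{i+1..<j}. x l) = (\<Sum>l\<in>{i+1..<j}. y l)" if "j \<le> m + 1" for i j
    using that assms by (intro sum.cong) auto
  then show ?thesis
    unfolding feasible_def by simp
qed

lemma finite_candidates: "finite (candidates k)"
proof -
  have "candidates k \<subseteq>
      (\<lambda>(i, j). slack i j - ereal (\<Sum>l\<in>{i+1..<k}. toll l)) ` ({0..m+1} \<times> {0..m+1})"
    unfolding candidates_def by auto
  then show ?thesis by (rule finite_subset) simp
qed

lemma toll_eq_nth_tseq: "l - 1 < n \<Longrightarrow> n \<le> m \<Longrightarrow> toll l = tseq U L m n ! (l - 1)"
  unfolding toll_def by (metis nth_take take_tseq)

lemma toll_eq_Min_candidates: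
  assumes "1 \<le> k" and "k \<le> m"
  shows "toll k = real_of_ereal (Min (candidates k))"
proof -
  obtain n where k: "k = Suc n" using assms(1) by (cases k) auto
  have "(\<Sum>l\<in>{i+1..<k}. tseq U L m n ! (l - 1)) = (\<Sum>l\<in>{i+1..<k}. toll l)" for i
    using assms k toll_eq_nth_tseq[of _ n] by (intro sum.cong) auto
  moreover have "toll k = tseq U L m (Suc n) ! n"
    using assms k toll_eq_nth_tseq[of k "Suc n"] by simp
  ultimately show ?thesis
    unfolding candidates_def k by (simp add: Let_def nth_append)
qed

text \<open>A candidate \<open>(i, j)\<close> for \<open>t_k\<close> with \<open>i < k - 1\<close> is the candidate \<open>(i, j)\<close> for
  \<open>t_(k-1)\<close> minus \<open>t_(k-1)\<close>, hence nonnegative by minimality of \<open>t_(k-1)\<close>.\<close>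

lemma candidates_nonneg:
  assumes "k \<le> m" and prev: "1 < k \<Longrightarrow> ereal (toll (k - 1)) = Min (candidates (k - 1))"
    and "x \<in> candidates k"
  shows "0 \<le> x"
proof -
  obtain i j where ij: "i < k" "k < j" "j \<le> m + 1"
    and x: "x = slack i j - ereal (\<Sum>l\<in>{i+1..<k}. toll l)"
    using assms(3) unfolding candidates_def by blast
  show ?thesis
  proof (cases "i = k - 1")
    case True
    then show ?thesis using x ij slack_nonneg[of i j] by simp
  next
    case False
    then have i: "i < k - 1" using ij by simp
    have "slack i j - ereal (\<Sum>l\<in>{i+1..<k-1}. toll l) \<in> candidates (k - 1)"
      unfolding candidates_def using i ij by force
    then have "ereal (toll (k - 1)) \<le> slack i j - ereal (\<Sum>l\<in>{i+1..<k-1}. toll l)"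
      using prev i finite_candidates by simp
    moreover have "(\<Sum>l\<in>{i+1..<k}. toll l) = (\<Sum>l\<in>{i+1..<k-1}. toll l) + toll (k - 1)"
      using i sum.atLeastLessThan_Suc[of "i+1" "k-1" toll] by simp
    ultimately show ?thesis
      using x by (cases "slack i j") auto
  qed
qed

lemma toll_nonneg_eq_Min:
  "1 \<le> k \<Longrightarrow> k \<le> m \<Longrightarrow> 0 \<le> toll k \<and> ereal (toll k) = Min (candidates k)"
proof (induction k rule: less_induct)
  case (less k)
  have cand_nonneg: "0 \<le> x" if "x \<in> candidates k" for x
    using candidates_nonneg[OF less.prems(2) _ that] less.IH[of "k - 1"] less.prems by simp
  have top: "slack 0 (m + 1) - ereal (\<Sum>l\<in>{1..<k}. toll l) \<in> candidates k"
    unfolding candidates_def using less.prems by force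
  then have Min_in: "Min (candidates k) \<in> candidates k"
    using finite_candidates by (intro Min_in) auto
  have "Min (candidates k) \<le> slack 0 (m + 1) - ereal (\<Sum>l\<in>{1..<k}. toll l)"
    using top finite_candidates by simp
  also have "\<dots> < \<infinity>"
    using slack_finite by (cases "slack 0 (m + 1)") auto
  finally have "\<bar>Min (candidates k)\<bar> \<noteq> \<infinity>"
    using cand_nonneg[OF Min_in] by auto
  then show ?case
    using toll_eq_Min_candidates[OF less.prems] cand_nonneg[OF Min_in]
    by (cases "Min (candidates k)") auto
qed

lemma toll_nonneg: "1 \<le> k \<Longrightarrow> k \<le> m \<Longrightarrow> 0 \<le> toll k"
  using toll_nonneg_eq_Min by blast

lemma toll_le_candidate:
  assumes "1 \<le> k" "k \<le> m" "i < k" "k < j" "j \<le> m + 1"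
  shows "ereal (toll k) \<le> slack i j - ereal (\<Sum>l\<in>{i+1..<k}. toll l)"
proof -
  have "slack i j - ereal (\<Sum>l\<in>{i+1..<k}. toll l) \<in> candidates k"
    unfolding candidates_def using assms by auto
  then show ?thesis
    using toll_nonneg_eq_Min[OF assms(1,2)] finite_candidates by simp
qed

lemma toll_eq_candidate:
  assumes "1 \<le> k" "k \<le> m"
  obtains i j where "i < k" "k < j" "j \<le> m + 1"
    and "ereal (toll k) = slack i j - ereal (\<Sum>l\<in>{i+1..<k}. toll l)"
proof -
  have "candidates k \<noteq> {}"
    unfolding candidates_def using assms by force
  then have "Min (candidates k) \<in> candidates k"
    using finite_candidates by simp
  then show ?thesis
    using that toll_nonneg_eq_Min[OF assms] unfolding candidates_def by auto
qed

lemma feasible_toll: "feasible toll"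
  unfolding feasible_def
proof (intro allI impI)
  fix i j :: nat assume ij: "i < j" "j \<le> m + 1"
  show "ereal (\<Sum>l\<in>{i+1..<j}. toll l) \<le> slack i j"
  proof (cases "j = i + 1")
    case True
    then show ?thesis using slack_nonneg[OF ij] by (simp add: zero_ereal_def)
  next
    case False
    define k where "k = j - 1"
    have k: "1 \<le> k" "k \<le> m" "i < k" "k < j" and j: "j = Suc k"
      using ij False unfolding k_def by auto
    have "(\<Sum>l\<in>{i+1..<j}. toll l) = (\<Sum>l\<in>{i+1..<k}. toll l) + toll k"
      using k j by simp
    then show ?thesis
      using toll_le_candidate[OF k ij(2)] by (cases "slack i j") auto
  qed
qed

text \<open>For the pair \<open>(i, j)\<close> attaining \<open>t_k\<close>, the tolls \<open>t_(i+1), \<dots>, t_k\<close> use up the whole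
  slack of \<open>(i, j)\<close>, which also bounds \<open>x_(i+1) + \<dots> + x_k\<close>; induction handles \<open>x_1 + \<dots> + x_i\<close>.\<close>

lemma sum_le_sum_toll:
  assumes nonneg: "\<And>l. 1 \<le> l \<Longrightarrow> l \<le> m \<Longrightarrow> 0 \<le> x l" and "feasible x"
  shows "(\<Sum>l=1..m. x l) \<le> (\<Sum>l=1..m. toll l)"
proof -
  have "(\<Sum>l=1..k. x l) \<le> (\<Sum>l=1..k. toll l)" if "k \<le> m" for k
    using that
  proof (induction k rule: less_induct)
    case (less k)
    show ?case
    proof (cases "k = 0")
      case False
      then have k: "1 \<le> k" "k \<le> m" using less.prems by auto
      obtain i j where ij: "i < k" "k < j" "j \<le> m + 1"
        and tk: "ereal (toll k) = slack i j - ereal (\<Sum>l\<in>{i+1..<k}. toll l)"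
        using toll_eq_candidate[OF k] .
      have slack: "slack i j = ereal (\<Sum>l=i+1..k. toll l)"
        using tk ij by (cases "slack i j") (auto simp: atLeastLessThanSuc_atLeastAtMost[symmetric])
      have "(\<Sum>l=1..k. x l) \<le> (\<Sum>l\<in>{1..<j}. x l)"
        using ij nonneg by (intro sum_mono2) auto
      also have "\<dots> = (\<Sum>l=1..i. x l) + (\<Sum>l\<in>{i+1..<j}. x l)"
        using sum.atLeastLessThan_concat[of 1 "i+1" j x] ij
        by (simp add: atLeastLessThanSuc_atLeastAtMost)
      also have "\<dots> \<le> (\<Sum>l=1..i. toll l) + (\<Sum>l=i+1..k. toll l)"
      proof (rule add_mono)
        show "(\<Sum>l=1..i. x l) \<le> (\<Sum>l=1..i. toll l)"
          using less.IH[of i] ij k by simp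
        show "(\<Sum>l\<in>{i+1..<j}. x l) \<le> (\<Sum>l=i+1..k. toll l)"
        proof -
          have "ereal (\<Sum>l\<in>{i+1..<j}. x l) \<le> slack i j"
            using \<open>feasible x\<close> ij unfolding feasible_def by (meson less_trans)
          then show ?thesis using slack by simp
        qed
      qed
      also have "\<dots> = (\<Sum>l=1..k. toll l)"
        using sum.atLeastLessThan_concat[of 1 "i+1" "k+1" toll] ij
        by (simp add: atLeastLessThanSuc_atLeastAtMost)
      finally show ?thesis .
    qed simp
  qed
  then show ?thesis by simp
qed

end

section \<open>Consistent tolls along a valid path\<close>

locale toll_path =
  fixes src tgt :: "'e \<Rightarrow> 'v" and AT AU :: "'e set" and c d :: "'e \<Rightarrow> nat"
    and s t :: 'v and P :: "'e list"
  assumes disjoint_arcs: "AT \<inter> AU = {}"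
    and toll_free_path: "\<exists>Q. is_path src tgt AU s Q t"
    and valid: "valid_path src tgt AT AU c d s t P"
begin

abbreviation "N \<equiv> net_arcs AT AU P"
abbreviation "m \<equiv> num_tolls AT P"
abbreviation "cost T \<equiv> net_cost AT c d T"
abbreviation "U \<equiv> Ucal src tgt AT AU d s t P"
abbreviation "L \<equiv> Lcal src tgt AT AU c d s t P"
abbreviation "vertex \<equiv> walk_vertex tgt s P"

text \<open>\<open>pos k\<close> is the (0-based) position of \<open>\<tau>_k\<close> in \<open>P\<close>, and the arcs of \<open>P\<close> strictly
  between \<open>\<tau>_i\<close> and \<open>\<tau>_j\<close> are those at positions \<open>term_pos i ..< init_pos j\<close>, where
  \<open>i = 0\<close> and \<open>j = m + 1\<close> stand for \<open>s\<close> and \<open>t\<close>.\<close>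

definition toll_positions :: "nat list" where
  "toll_positions = filter (\<lambda>n. P ! n \<in> AT) [0..<length P]"

definition pos :: "nat \<Rightarrow> nat" where
  "pos k = toll_positions ! (k - 1)"

definition term_pos :: "nat \<Rightarrow> nat" where
  "term_pos i = (if i = 0 then 0 else Suc (pos i))"

definition init_pos :: "nat \<Rightarrow> nat" where
  "init_pos j = (if j = m + 1 then length P else pos j)"

definition seg_cost :: "('e \<Rightarrow> real) \<Rightarrow> nat \<Rightarrow> nat \<Rightarrow> real" where
  "seg_cost T a b = (\<Sum>n\<in>{a..<b}. cost T (P ! n))"

lemma path_P: "is_path src tgt N s P t"
  using valid unfolding valid_path_def shortest_def by simp

lemma walk_P: "walk src tgt s P t"
  using path_P unfolding is_path_def by simp

lemma tolls_eq_map_nth: "tolls AT P = map (nth P) toll_positions"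
proof -
  have "tolls AT P = filter (\<lambda>e. e \<in> AT) (map (nth P) [0..<length P])"
    unfolding tolls_def by (simp add: map_nth)
  then show ?thesis
    unfolding toll_positions_def by (simp add: filter_map comp_def)
qed

lemma length_toll_positions: "length toll_positions = m"
  unfolding num_tolls_def tolls_eq_map_nth by simp

lemma pos_less_length: "k \<in> {1..m} \<Longrightarrow> pos k < length P"
  using nth_mem[of "k - 1" toll_positions] length_toll_positions
  unfolding pos_def toll_positions_def by auto

lemma nth_pos: "k \<in> {1..m} \<Longrightarrow> P ! pos k = tau AT P k"
  unfolding pos_def tau_def tolls_eq_map_nth using length_toll_positions by (subst nth_map) auto

lemma tau_in_AT: "k \<in> {1..m} \<Longrightarrow> tau AT P k \<in> AT"
  unfolding tau_def num_tolls_def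
  using nth_mem[of "k - 1" "tolls AT P"] by (auto simp: tolls_def)

lemma strict_mono_pos: "strict_mono_on {1..m} pos"
proof (rule strict_mono_onI)
  fix k l :: nat assume "k \<in> {1..m}" "l \<in> {1..m}" "k < l"
  moreover have "sorted_wrt (<) toll_positions"
    unfolding toll_positions_def by (simp add: sorted_wrt_filter)
  ultimately show "pos k < pos l"
    unfolding pos_def using length_toll_positions sorted_wrt_nth_less by fastforce
qed

lemma toll_position_eq_pos:
  assumes "n < length P" and "P ! n \<in> AT"
  obtains k where "k \<in> {1..m}" and "n = pos k"
proof -
  have "n \<in> set toll_positions"
    using assms unfolding toll_positions_def by simp
  then obtain r where "r < m" "toll_positions ! r = n"
    using length_toll_positions by (metis in_set_conv_nth)
  then show ?thesis
    using that[of "Suc r"] unfolding pos_def by simp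
qed

lemma toll_in_P_eq_tau:
  assumes "e \<in> AT" and "e \<in> set P"
  obtains k where "k \<in> {1..m}" and "e = tau AT P k"
proof -
  obtain n where "n < length P" "P ! n = e"
    using assms(2) by (metis in_set_conv_nth)
  then show ?thesis
    using toll_position_eq_pos[of n] assms(1) nth_pos that by metis
qed

lemma term_pos_le_pos_iff:
  "i \<le> m \<Longrightarrow> k \<in> {1..m} \<Longrightarrow> term_pos i \<le> pos k \<longleftrightarrow> i < k"
  unfolding term_pos_def using strict_mono_on_less[OF strict_mono_pos, of i k] by auto

lemma pos_less_init_pos_iff:
  "j \<in> {1..m+1} \<Longrightarrow> k \<in> {1..m} \<Longrightarrow> pos k < init_pos j \<longleftrightarrow> k < j"
  unfolding init_pos_def using strict_mono_on_less[OF strict_mono_pos, of k j] pos_less_length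
  by auto

lemma term_pos_Suc_init_pos: "k \<in> {1..m} \<Longrightarrow> term_pos k = Suc (init_pos k)"
  unfolding term_pos_def init_pos_def by simp

lemma init_pos_mono: "1 \<le> j \<Longrightarrow> j \<le> i \<Longrightarrow> i \<le> m + 1 \<Longrightarrow> init_pos j \<le> init_pos i"
  using strict_mono_on_leD[OF strict_mono_pos, of j i] pos_less_length[of j]
  unfolding init_pos_def by (cases "j = m + 1") auto

lemma init_pos_le_length: "1 \<le> j \<Longrightarrow> j \<le> m + 1 \<Longrightarrow> init_pos j \<le> length P"
  using init_pos_mono[of j "m + 1"] by (simp add: init_pos_def)

lemma term_pos_le_init_pos: "i < j \<Longrightarrow> j \<le> m + 1 \<Longrightarrow> term_pos i \<le> init_pos j"
  using term_pos_le_pos_iff[of i j] pos_less_length[of i]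
  unfolding init_pos_def by (auto simp: term_pos_def)

lemma tolls_between:
  assumes "i < j" and "j \<le> m + 1"
  shows "{n\<in>{term_pos i..<init_pos j}. P ! n \<in> AT} = pos ` {i+1..<j}"
proof (intro equalityI subsetI)
  fix n assume n: "n \<in> {n\<in>{term_pos i..<init_pos j}. P ! n \<in> AT}"
  then have "n < length P"
    using init_pos_le_length[of j] assms by auto
  then obtain k where k: "k \<in> {1..m}" "n = pos k"
    using toll_position_eq_pos n by blast
  then show "n \<in> pos ` {i+1..<j}"
    using n assms term_pos_le_pos_iff[of i k] pos_less_init_pos_iff[of j k] by auto
next
  fix n assume "n \<in> pos ` {i+1..<j}"
  then obtain k where k: "k \<in> {i+1..<j}" "n = pos k" by blast
  then have "k \<in> {1..m}" using assms by auto
  then show "n \<in> {n\<in>{term_pos i..<init_pos j}. P ! n \<in> AT}"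
    using k assms term_pos_le_pos_iff[of i k] pos_less_init_pos_iff[of j k] nth_pos tau_in_AT
    by auto
qed

lemma term_pt_eq_vertex: "i \<le> m \<Longrightarrow> term_pt tgt AT s P i = vertex (term_pos i)"
  using pos_less_length[of i] nth_pos[of i]
  unfolding term_pt_def term_pos_def by auto

lemma init_pt_eq_vertex: "1 \<le> j \<Longrightarrow> j \<le> m + 1 \<Longrightarrow> init_pt src AT t P j = vertex (init_pos j)"
  using walk_last[OF walk_P] walk_src_nth[OF walk_P, of "pos j"] pos_less_length[of j] nth_pos[of j]
  unfolding init_pt_def init_pos_def by auto

lemma cost_nonneg: "toll_vector AT T \<Longrightarrow> 0 \<le> cost T e"
  unfolding toll_vector_def net_cost_def by auto

lemma cost_toll_free: "set R \<subseteq> AU \<Longrightarrow> plen (cost T) R = plen (\<lambda>e. real (d e)) R"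
  using disjoint_arcs by (induction R) (auto simp: net_cost_def)

lemma seg_cost_eq_plen:
  "a \<le> b \<Longrightarrow> b \<le> length P \<Longrightarrow> seg_cost T a b = plen (cost T) (drop a (take b P))"
  unfolding seg_cost_def by (simp add: plen_drop_take)

lemma seg_cost_split: "a \<le> b \<Longrightarrow> b \<le> e \<Longrightarrow> seg_cost T a e = seg_cost T a b + seg_cost T b e"
  unfolding seg_cost_def by (simp add: sum.atLeastLessThan_concat)

lemma seg_cost_mono:
  "toll_vector AT T \<Longrightarrow> a \<le> b \<Longrightarrow> b \<le> e \<Longrightarrow> seg_cost T a b \<le> seg_cost T a e"
  using seg_cost_split[of a b e T] cost_nonneg[of T]
  by (simp add: seg_cost_def sum_nonneg)

lemma seg_cost_across_toll:
  assumes "k \<in> {1..m}" and "a \<le> init_pos k" and "term_pos k \<le> b"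
  shows "seg_cost T a b
    = seg_cost T a (init_pos k) + real (c (tau AT P k)) + T (tau AT P k) + seg_cost T (term_pos k) b"
proof -
  have "seg_cost T (init_pos k) b = cost T (P ! init_pos k) + seg_cost T (term_pos k) b"
    using assms term_pos_Suc_init_pos[of k] unfolding seg_cost_def
    by (simp add: sum.atLeast_Suc_lessThan)
  moreover have "cost T (P ! init_pos k) = real (c (tau AT P k)) + T (tau AT P k)"
    using assms(1) nth_pos tau_in_AT by (auto simp: init_pos_def net_cost_def)
  ultimately show ?thesis
    using seg_cost_split[of a "init_pos k" b T] assms term_pos_Suc_init_pos[of k] by simp
qed

lemma seg_cost_tolls:
  assumes "i < j" and "j \<le> m + 1"
  shows "seg_cost T (term_pos i) (init_pos j)
    = seg_cost (\<lambda>_. 0) (term_pos i) (init_pos j) + (\<Sum>l\<in>{i+1..<j}. T (tau AT P l))"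
proof -
  let ?I = "{term_pos i..<init_pos j}"
  have "seg_cost T (term_pos i) (init_pos j)
      = seg_cost (\<lambda>_. 0) (term_pos i) (init_pos j) + (\<Sum>n\<in>?I. if P ! n \<in> AT then T (P ! n) else 0)"
    unfolding seg_cost_def net_cost_def sum.distrib[symmetric] by (intro sum.cong) auto
  also have "(\<Sum>n\<in>?I. if P ! n \<in> AT then T (P ! n) else 0) = (\<Sum>n\<in>{n\<in>?I. P ! n \<in> AT}. T (P ! n))"
    by (rule sum.inter_filter[symmetric]) simp
  also have "\<dots> = (\<Sum>l\<in>{i+1..<j}. T (P ! pos l))"
    unfolding tolls_between[OF assms]
    using strict_mono_on_imp_inj_on[OF strict_mono_pos] assms
    by (subst sum.reindex) (auto intro: inj_on_subset)
  also have "\<dots> = (\<Sum>l\<in>{i+1..<j}. T (tau AT P l))"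
    using assms nth_pos by (intro sum.cong) auto
  finally show ?thesis .
qed

lemma Ucal_le_plen:
  "is_path src tgt AU (term_pt tgt AT s P i) Q (init_pt src AT t P j)
    \<Longrightarrow> U i j \<le> ereal (plen (\<lambda>e. real (d e)) Q)"
  unfolding Ucal_def by (rule Inf_lower) blast

lemma Ucal_0_finite: "U 0 (m + 1) \<noteq> \<infinity>"
proof -
  obtain Q where "is_path src tgt AU s Q t"
    using toll_free_path by blast
  then have "U 0 (m + 1) \<le> ereal (plen (\<lambda>e. real (d e)) Q)"
    by (intro Ucal_le_plen) (simp add: term_pt_def init_pt_def)
  then show ?thesis by auto
qed

text \<open>Replacing the part of \<open>P\<close> between positions \<open>a\<close> and \<open>b\<close> by \<open>R\<close> gives an \<open>s\<close>-\<open>t\<close> walk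
  in \<open>N\<close>, which shortcuts to a competing path.\<close>

lemma seg_cost_le_plen_if_consistent:
  assumes T: "toll_vector AT T" and cons: "consistent src tgt AT AU c d s t P T"
    and ab: "a \<le> b" "b \<le> length P"
    and R: "walk src tgt (vertex a) R (vertex b)" "set R \<subseteq> N"
  shows "seg_cost T a b \<le> plen (cost T) R"
proof -
  define W where "W = take a P @ R @ drop b P"
  have "walk src tgt s W t"
    using walk_take_drop(1)[OF walk_P, of a] walk_take_drop(2)[OF walk_P, of b] ab R(1)
    unfolding W_def walk_append by auto
  moreover have "set W \<subseteq> N"
    using path_P R(2) unfolding W_def is_path_def by (auto dest: in_set_takeD in_set_dropD)
  ultimately obtain Q where Q: "is_path src tgt N s Q t" "plen (cost T) Q \<le> plen (cost T) W"
    using walk_shortcut[of src tgt s W t N "cost T"] cost_nonneg[OF T] by blast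
  have "plen (cost T) P \<le> plen (cost T) Q"
    using cons Q(1) unfolding consistent_def shortest_def by blast
  moreover have "plen (cost T) P
      = plen (cost T) (take a P) + seg_cost T a b + plen (cost T) (drop b P)"
    using plen_take_drop[of "cost T" b P] plen_take_drop[of "cost T" a "take b P"]
      seg_cost_eq_plen[OF ab] ab by (simp add: min_absorb1)
  ultimately show ?thesis
    using Q(2) unfolding W_def by simp
qed

lemma seg_cost_le_Ucal_if_consistent:
  assumes T: "toll_vector AT T" and cons: "consistent src tgt AT AU c d s t P T"
    and ij: "i < j" "j \<le> m + 1"
  shows "ereal (seg_cost T (term_pos i) (init_pos j)) \<le> U i j"
  unfolding Ucal_def
proof (rule Inf_greatest)
  fix x assume "x \<in> {ereal (plen (\<lambda>e. real (d e)) Q) | Q.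
      is_path src tgt AU (term_pt tgt AT s P i) Q (init_pt src AT t P j)}"
  then obtain Q where x: "x = ereal (plen (\<lambda>e. real (d e)) Q)"
    and Q: "is_path src tgt AU (term_pt tgt AT s P i) Q (init_pt src AT t P j)" by blast
  have "walk src tgt (vertex (term_pos i)) Q (vertex (init_pos j))"
    using Q ij term_pt_eq_vertex[of i] init_pt_eq_vertex[of j] by (simp add: is_path_def)
  moreover have "set Q \<subseteq> N"
    using Q by (auto simp: is_path_def net_arcs_def)
  ultimately have "seg_cost T (term_pos i) (init_pos j) \<le> plen (cost T) Q"
    using seg_cost_le_plen_if_consistent[OF T cons term_pos_le_init_pos[OF ij]] ij
      init_pos_le_length[of j] by simp
  then show "ereal (seg_cost T (term_pos i) (init_pos j)) \<le> x"
    using x Q cost_toll_free by (simp add: is_path_def)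
qed

lemma toll_vector_zero: "toll_vector AT (\<lambda>_. 0)"
  by (simp add: toll_vector_def)

lemma consistent_zero: "consistent src tgt AT AU c d s t P (\<lambda>_. 0)"
  using valid by (simp add: valid_path_def consistent_def)

lemma Ucal_Suc_eq_seg_cost:
  assumes "l \<le> m"
  shows "U l (Suc l) = ereal (seg_cost (\<lambda>_. 0) (term_pos l) (init_pos (Suc l)))"
proof (rule antisym)
  define a b where "a = term_pos l" and "b = init_pos (Suc l)"
  define S where "S = drop a (take b P)"
  have ab: "a \<le> b" "b \<le> length P"
    using term_pos_le_init_pos[of l "Suc l"] init_pos_le_length[of "Suc l"] assms
    unfolding a_def b_def by auto
  have S: "is_path src tgt N (vertex a) S (vertex b)"
    unfolding S_def using is_path_drop_take[OF path_P ab] .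
  have no_toll: "{n\<in>{a..<b}. P ! n \<in> AT} = {}"
    using tolls_between[of l "Suc l"] assms unfolding a_def b_def by simp
  have "set S \<subseteq> AU"
  proof
    fix e assume "e \<in> set S"
    then obtain k where "k < b - a" "e = P ! (a + k)"
      using ab by (auto simp: S_def in_set_conv_nth)
    then have "e \<notin> AT" and "e \<in> N"
      using no_toll ab path_P nth_mem[of "a + k" P] by (auto simp: is_path_def)
    then show "e \<in> AU" by (simp add: net_arcs_def)
  qed
  then have "is_path src tgt AU (term_pt tgt AT s P l) S (init_pt src AT t P (Suc l))"
    using S assms term_pt_eq_vertex[of l] init_pt_eq_vertex[of "Suc l"]
    unfolding a_def b_def is_path_def by simp
  then have "U l (Suc l) \<le> ereal (plen (\<lambda>e. real (d e)) S)"
    by (rule Ucal_le_plen)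
  also have "plen (\<lambda>e. real (d e)) S = seg_cost (\<lambda>_. 0) a b"
    using cost_toll_free[OF \<open>set S \<subseteq> AU\<close>] seg_cost_eq_plen[OF ab] unfolding S_def by simp
  finally show "U l (Suc l) \<le> ereal (seg_cost (\<lambda>_. 0) (term_pos l) (init_pos (Suc l)))"
    unfolding a_def b_def .
next
  show "ereal (seg_cost (\<lambda>_. 0) (term_pos l) (init_pos (Suc l))) \<le> U l (Suc l)"
    using seg_cost_le_Ucal_if_consistent[OF toll_vector_zero consistent_zero] assms by simp
qed

lemma seg_cost_zero_telescope:
  "i < j \<Longrightarrow> j \<le> m + 1 \<Longrightarrow>
    (\<Sum>l\<in>{i..<j}. seg_cost (\<lambda>_. 0) (term_pos l) (init_pos (Suc l)))
      + (\<Sum>l\<in>{i+1..<j}. real (c (tau AT P l)))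
    = seg_cost (\<lambda>_. 0) (term_pos i) (init_pos j)"
proof (induction j)
  case (Suc j)
  show ?case
  proof (cases "j = i")
    case False
    then have j: "i < j" "j \<in> {1..m}" using Suc.prems by auto
    have "seg_cost (\<lambda>_. 0) (term_pos i) (init_pos (Suc j))
        = seg_cost (\<lambda>_. 0) (term_pos i) (init_pos j) + real (c (tau AT P j))
          + seg_cost (\<lambda>_. 0) (term_pos j) (init_pos (Suc j))"
      using seg_cost_across_toll[of j "term_pos i" "init_pos (Suc j)" "\<lambda>_. 0"] j Suc.prems
        term_pos_le_init_pos[of i j] term_pos_le_init_pos[of j "Suc j"] by simp
    then show ?thesis using Suc.IH j Suc.prems by simp
  qed simp
qed simp

lemma Lcal_eq_seg_cost:
  assumes "i < j" and "j \<le> m + 1"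
  shows "L i j = ereal (seg_cost (\<lambda>_. 0) (term_pos i) (init_pos j))"
proof -
  have "(\<Sum>l\<in>{i..<j}. U l (l + 1))
      = (\<Sum>l\<in>{i..<j}. ereal (seg_cost (\<lambda>_. 0) (term_pos l) (init_pos (Suc l))))"
    using assms Ucal_Suc_eq_seg_cost by (intro sum.cong) auto
  then show ?thesis
    unfolding Lcal_def using seg_cost_zero_telescope[OF assms] by simp
qed

sublocale greedy_tolls U L m
proof
  fix i j :: nat assume ij: "i < j" "j \<le> m + 1"
  show "0 \<le> U i j - L i j"
    using seg_cost_le_Ucal_if_consistent[OF toll_vector_zero consistent_zero ij]
      Lcal_eq_seg_cost[OF ij] by (cases "U i j") auto
next
  show "U 0 (m + 1) - L 0 (m + 1) \<noteq> \<infinity>"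
    using Ucal_0_finite Lcal_eq_seg_cost[of 0 "m + 1"] by (cases "U 0 (m + 1)") auto
qed

lemma split_at_last_toll:
  assumes Q: "is_path src tgt N s Q v" and "\<exists>e\<in>set Q. e \<in> AT"
  obtains Q1 i Q2 where "Q = Q1 @ tau AT P i # Q2" and "i \<in> {1..m}"
    and "is_path src tgt N s Q1 (init_pt src AT t P i)"
    and "is_path src tgt N (term_pt tgt AT s P i) Q2 v"
    and "\<forall>e\<in>set Q2. e \<notin> AT"
proof -
  obtain Q1 e Q2 where split: "Q = Q1 @ e # Q2" and "e \<in> AT" and no_toll: "\<forall>z\<in>set Q2. z \<notin> AT"
    using split_list_last_prop[OF assms(2)] by blast
  have "e \<in> set P"
    using Q \<open>e \<in> AT\<close> disjoint_arcs split by (auto simp: is_path_def net_arcs_def)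
  with \<open>e \<in> AT\<close> obtain i where i: "i \<in> {1..m}" "e = tau AT P i"
    by (rule toll_in_P_eq_tau)
  then have "is_path src tgt N s Q1 (init_pt src AT t P i)"
    and "is_path src tgt N (term_pt tgt AT s P i) Q2 v"
    using is_path_split[of src tgt N s Q1 e Q2 v] Q split by (auto simp: init_pt_def term_pt_def)
  with that show ?thesis
    using split i no_toll by blast
qed

lemma seg_cost_le_toll_free_plen:
  assumes "ereal (seg_cost T (term_pos i) (init_pos j)) \<le> U i j"
    and Q: "is_path src tgt N (term_pt tgt AT s P i) Q (init_pt src AT t P j)"
    and "\<forall>e\<in>set Q. e \<notin> AT"
  shows "seg_cost T (term_pos i) (init_pos j) \<le> plen (cost T) Q"
proof -
  have "set Q \<subseteq> AU"
    using assms(2,3) by (auto simp: is_path_def net_arcs_def)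
  then have "U i j \<le> ereal (plen (\<lambda>e. real (d e)) Q)"
    using Q by (intro Ucal_le_plen) (simp add: is_path_def)
  with assms(1) have "ereal (seg_cost T (term_pos i) (init_pos j)) \<le> ereal (plen (\<lambda>e. real (d e)) Q)"
    by (rule order_trans)
  then show ?thesis
    using cost_toll_free[OF \<open>set Q \<subseteq> AU\<close>] by simp
qed

text \<open>After its last toll arc \<open>\<tau>_i\<close>, a competing path to \<open>INIT(\<tau>_j)\<close> is toll-free, so the
  hypothesis for \<open>(i, j)\<close> bounds that part; the part before \<open>\<tau>_i\<close> is handled by induction
  on the length of the path.\<close>

lemma seg_cost_le_plen_if_le_Ucal:
  assumes T: "toll_vector AT T"
    and H: "\<And>i j. i < j \<Longrightarrow> j \<le> m + 1 \<Longrightarrow> ereal (seg_cost T (term_pos i) (init_pos j)) \<le> U i j"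
    and "is_path src tgt N s Q (init_pt src AT t P j)" and "1 \<le> j" and "j \<le> m + 1"
  shows "seg_cost T 0 (init_pos j) \<le> plen (cost T) Q"
  using assms(3-5)
proof (induction "length Q" arbitrary: Q j rule: less_induct)
  case less
  show ?case
  proof (cases "\<exists>e\<in>set Q. e \<in> AT")
    case False
    then show ?thesis
      using seg_cost_le_toll_free_plen[OF H, of 0 j Q] less.prems
      by (simp add: term_pt_def term_pos_def)
  next
    case True
    with less.prems(1) obtain Q1 i Q2 where Q: "Q = Q1 @ tau AT P i # Q2" and i: "i \<in> {1..m}"
      and Q1: "is_path src tgt N s Q1 (init_pt src AT t P i)"
      and Q2: "is_path src tgt N (term_pt tgt AT s P i) Q2 (init_pt src AT t P j)"
      and no_toll: "\<forall>e\<in>set Q2. e \<notin> AT"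
      by (rule split_at_last_toll)
    have IH: "seg_cost T 0 (init_pos i) \<le> plen (cost T) Q1"
      using less.hyps[OF _ Q1] Q i by auto
    have plen_Q: "plen (cost T) Q
        = plen (cost T) Q1 + real (c (tau AT P i)) + T (tau AT P i) + plen (cost T) Q2"
      using Q i tau_in_AT by (simp add: net_cost_def)
    show ?thesis
    proof (cases "i < j")
      case True
      have "seg_cost T 0 (init_pos j) = seg_cost T 0 (init_pos i) + real (c (tau AT P i))
          + T (tau AT P i) + seg_cost T (term_pos i) (init_pos j)"
        using seg_cost_across_toll[of i 0 "init_pos j" T] i True less.prems
          term_pos_le_init_pos[of i j] by simp
      then show ?thesis
        using IH seg_cost_le_toll_free_plen[OF H[OF True less.prems(3)] Q2 no_toll] plen_Q by simp
    next
      case False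
      then have "seg_cost T 0 (init_pos j) \<le> seg_cost T 0 (init_pos i)"
        using seg_cost_mono[OF T] init_pos_mono[of j i] less.prems i by simp
      moreover have "0 \<le> plen (cost T) Q2"
        using cost_nonneg[OF T] by (intro plen_nonneg)
      moreover have "0 \<le> T (tau AT P i)"
        using T i tau_in_AT by (auto simp: toll_vector_def)
      ultimately show ?thesis
        using IH plen_Q by simp
    qed
  qed
qed

lemma consistent_if_seg_cost_le_Ucal:
  assumes T: "toll_vector AT T"
    and H: "\<And>i j. i < j \<Longrightarrow> j \<le> m + 1 \<Longrightarrow> ereal (seg_cost T (term_pos i) (init_pos j)) \<le> U i j"
  shows "consistent src tgt AT AU c d s t P T"
proof -
  have "plen (cost T) P \<le> plen (cost T) Q" if "is_path src tgt N s Q t" for Q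
    using seg_cost_le_plen_if_le_Ucal[OF T H, of Q "m + 1"] that seg_cost_eq_plen[of 0 "length P" T]
    by (simp add: init_pt_def init_pos_def)
  then show ?thesis
    using path_P unfolding consistent_def shortest_def by blast
qed

lemma consistent_iff_feasible:
  assumes T: "toll_vector AT T"
  shows "consistent src tgt AT AU c d s t P T \<longleftrightarrow> feasible (\<lambda>l. T (tau AT P l))"
proof -
  have "ereal (seg_cost T (term_pos i) (init_pos j)) \<le> U i j
      \<longleftrightarrow> ereal (\<Sum>l\<in>{i+1..<j}. T (tau AT P l)) \<le> slack i j"
    if "i < j" "j \<le> m + 1" for i j
    using seg_cost_tolls[OF that, of T] Lcal_eq_seg_cost[OF that]
    by (simp add: ereal_le_minus add.commute)
  then show ?thesis
    unfolding feasible_def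
    using consistent_if_seg_cost_le_Ucal[OF T] seg_cost_le_Ucal_if_consistent[OF T] by blast
qed

lemma opt_toll_tau: "k \<in> {1..m} \<Longrightarrow> opt_toll src tgt AT AU c d s t P (tau AT P k) = toll k"
proof -
  assume k: "k \<in> {1..m}"
  have "distinct (tolls AT P)"
    using path_P by (simp add: is_path_def tolls_def distinct_map)
  moreover have "length (tolls AT P) = length (tvals src tgt AT AU c d s t P)"
    by (simp add: tvals_def num_tolls_def)
  ultimately have "map_of (zip (tolls AT P) (tvals src tgt AT AU c d s t P)) (tau AT P k)
      = Some (tvals src tgt AT AU c d s t P ! (k - 1))"
    using k unfolding tau_def by (intro map_of_zip_nth) (auto simp: num_tolls_def)
  then show ?thesis
    by (simp add: opt_toll_def tvals_def toll_def)
qed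

lemma toll_vector_opt_toll: "toll_vector AT (opt_toll src tgt AT AU c d s t P)"
  unfolding toll_vector_def
proof
  fix e assume "e \<in> AT"
  show "0 \<le> opt_toll src tgt AT AU c d s t P e"
  proof (cases "e \<in> set P")
    case True
    then obtain k where "k \<in> {1..m}" "e = tau AT P k"
      using toll_in_P_eq_tau \<open>e \<in> AT\<close> by blast
    then show ?thesis using opt_toll_tau toll_nonneg by auto
  next
    case False
    then have "e \<notin> set (tolls AT P)"
      by (simp add: tolls_def)
    then have "map_of (zip (tolls AT P) (tvals src tgt AT AU c d s t P)) e = None"
      by (auto simp: map_of_eq_None_iff dest: set_zip_leftD)
    then show ?thesis
      by (simp add: opt_toll_def)
  qed
qed

end

theorem corollary1:
  fixes V :: "'v set" and A AT AU :: "'e set" and src tgt :: "'e \<Rightarrow> 'v"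
    and c d :: "'e \<Rightarrow> nat" and s t :: 'v and P :: "'e list"
  assumes "finite A" and "A = AT \<union> AU" and "AT \<inter> AU = {}"
    and "\<forall>e\<in>A. src e \<in> V \<and> tgt e \<in> V" and "s \<in> V" and "t \<in> V"
    and "\<exists>Q. is_path src tgt AU s Q t"
    and "valid_path src tgt AT AU c d s t P"
  shows "toll_vector AT (opt_toll src tgt AT AU c d s t P)
    \<and> consistent src tgt AT AU c d s t P (opt_toll src tgt AT AU c d s t P)
    \<and> (\<forall>k\<in>{1..num_tolls AT P}.
          opt_toll src tgt AT AU c d s t P (tau AT P k) = tk src tgt AT AU c d s t P k)
    \<and> (\<forall>T'. toll_vector AT T' \<and> consistent src tgt AT AU c d s t P T' \<longrightarrow>
          (\<Sum>k=1..num_tolls AT P. T' (tau AT P k))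
            \<le> (\<Sum>k=1..num_tolls AT P. tk src tgt AT AU c d s t P k))"
proof -
  interpret toll_path src tgt AT AU c d s t P
    using assms(3,7,8) by unfold_locales
  let ?T = "opt_toll src tgt AT AU c d s t P"
  have tk_eq_toll: "tk src tgt AT AU c d s t P k = toll k" for k
    by (simp add: tk_def tvals_def toll_def)
  have "feasible (\<lambda>l. ?T (tau AT P l))"
    using feasible_toll feasible_cong[of "\<lambda>l. ?T (tau AT P l)" toll] opt_toll_tau by simp
  then have "consistent src tgt AT AU c d s t P ?T"
    using consistent_iff_feasible[OF toll_vector_opt_toll] by simp
  moreover have "(\<Sum>k=1..m. T' (tau AT P k)) \<le> (\<Sum>k=1..m. toll k)"
    if "toll_vector AT T'" and "consistent src tgt AT AU c d s t P T'" for T'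
    using that consistent_iff_feasible tau_in_AT
    by (intro sum_le_sum_toll) (auto simp: toll_vector_def)
  ultimately show ?thesis
    using toll_vector_opt_toll opt_toll_tau by (simp add: tk_eq_toll)
qed

end
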